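(* Consider the single unicast index coding problem $\mathbb I$ with six messages $W_1,\dots,W_6$ and six receivers, where receiver $j$ demands only $W_j$ and has side information $S(j)={\cal W}\setminus(\{W_j\}\cup I_j)$, with $I_1=\{W_4\}$, $I_2=\{W_1,W_3\}$, $I_3=\{W_1\}$, $I_4=\emptyset$, $I_5=\{W_1,W_3,W_4\}$, $I_6=\{W_1,W_2,W_4\}$ (so $Interf_j(j)=I_j$). Then (a) $\mathbb I$ has no acyclic subset of messages of size $4$, and (b) $\mathbb I$ admits no valid scalar linear index code of length $3$ over any finite field.
   Context: Index coding setup: An index coding problem $\mathbb I$ over a finite field $\mathbb F$ consists of a set of messages ${\cal W}=\{W_1,\dots,W_n\}$ (each message is a symbol of $\mathbb F$ in the scalar setting), a set of receivers $[1:T]$, and for each receiver $j$ a demand set $D(j)\subseteq{\cal W}$ and a side-information set $S(j)\subseteq {\cal W}\setminus D(j)$. For a receiver $j$ and $W_k\in D(j)$, the interfering set is $Interf_k(j)={\cal W}\setminus(\{W_k\}\cup S(j))$. A scalar linear index code of length $L$ over $\mathbb F$ is an assignment of vectors $V_1,\dots,V_n\in\mathbb F^L$ to the messages; the source broadcasts $\sum_{i=1}^n V_iW_i\in\mathbb F^L$, and the code is valid if every receiver $j$ can recover every message of $D(j)$ from the broadcast codeword and the messages in $S(j)$. An acyclic subset of messages of size $4$ is a set of four distinct messages $W_{i_1},W_{i_2},W_{i_3},W_{i_4}$ such that for each $k\in\{1,2,3,4\}$ there is a receiver $j_k$ demanding $W_{i_k}$ with $\{W_{i_{k'}}:k'<k\}\subseteq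 Interf_{i_k}(j_k)$. *)

theory Defs
  imports Main
begin

text \<open>General index coding setup. Messages are indexed by 1..n, receivers by 1..T.
  D j is the demand set and S j the side-information set of receiver j (sets of message indices).\<close>

definition Interf :: "nat \<Rightarrow> (nat \<Rightarrow> nat set) \<Rightarrow> nat \<Rightarrow> nat \<Rightarrow> nat set" where
  "Interf n S j k = {1..n} - ({k} \<union> S j)"

definition has_acyclic_subset4 ::
  "nat \<Rightarrow> nat \<Rightarrow> (nat \<Rightarrow> nat set) \<Rightarrow> (nat \<Rightarrow> nat set) \<Rightarrow> bool" where
  "has_acyclic_subset4 n T D S \<longleftrightarrow>
     (\<exists>i :: nat \<Rightarrow> nat. inj_on i {..<4} \<and> i ` {..<4} \<subseteq> {1..n} \<and>
        (\<forall>k<4. \<exists>j\<in>{1..T}. i k \<in> D j \<and> i ` {..<k} \<subseteq> Interf n S j (i k)))"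

text \<open>Broadcast codeword of a scalar linear code of length L: coordinate l < L of
  sum over i of V i * W i, where V i is the vector (V i 0, ..., V i (L-1)) in F^L.\<close>

definition codeword :: "nat \<Rightarrow> nat \<Rightarrow> (nat \<Rightarrow> nat \<Rightarrow> 'a::field) \<Rightarrow> (nat \<Rightarrow> 'a) \<Rightarrow> nat \<Rightarrow> 'a" where
  "codeword n L V W l = (\<Sum>i\<in>{1..n}. V i l * W i)"

text \<open>Receiver j can recover message k: the message value is uniquely determined by
  the codeword and the side-information messages (equivalently, a decoding function exists).\<close>

definition recovers ::
  "nat \<Rightarrow> nat \<Rightarrow> (nat \<Rightarrow> nat set) \<Rightarrow> (nat \<Rightarrow> nat \<Rightarrow> 'a::field) \<Rightarrow> nat \<Rightarrow> nat \<Rightarrow> bool" where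
  "recovers n L S V j k \<longleftrightarrow>
     (\<forall>W W' :: nat \<Rightarrow> 'a.
        (\<forall>l<L. codeword n L V W l = codeword n L V W' l) \<longrightarrow>
        (\<forall>m\<in>S j. W m = W' m) \<longrightarrow> W k = W' k)"

definition valid_linear_code ::
  "nat \<Rightarrow> nat \<Rightarrow> (nat \<Rightarrow> nat set) \<Rightarrow> (nat \<Rightarrow> nat set) \<Rightarrow> nat \<Rightarrow> (nat \<Rightarrow> nat \<Rightarrow> 'a::field) \<Rightarrow> bool" where
  "valid_linear_code n T D S L V \<longleftrightarrow> (\<forall>j\<in>{1..T}. \<forall>k\<in>D j. recovers n L S V j k)"

definition I6 :: "nat \<Rightarrow> nat set" where
  "I6 j = (if j = 1 then {4} else if j = 2 then {1,3} else if j = 3 then {1}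
           else if j = 4 then {} else if j = 5 then {1,3,4} else if j = 6 then {1,2,4} else {})"

definition D6 :: "nat \<Rightarrow> nat set" where
  "D6 j = {j}"

definition S6 :: "nat \<Rightarrow> nat set" where
  "S6 j = {1..6} - ({j} \<union> I6 j)"

end

theory Submission
  imports Defs
begin

text \<open>A scalar linear code lets receiver j decode W_j exactly when every linear dependency
  among V_j and the V_i with W_i in I_j has coefficient zero at V_j. In F^3, receivers 1, 3 and 2
  force V_1, V_3, V_2 to be a basis; receivers 5 and 6 force V_4 into the planes spanned by
  V_1, V_3 and by V_1, V_2, hence onto the line of V_1; receiver 1 then forces V_4 = 0, which
  receiver 4 forbids. For acyclicity, the last message of an acyclic 4-set needs three
  interfering messages, so it is W_5 or W_6, and no member of I_5 or I_6 has two other members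
  of that set as interference.\<close>

definition det3 :: "(nat \<Rightarrow> 'a::comm_ring) \<Rightarrow> (nat \<Rightarrow> 'a) \<Rightarrow> (nat \<Rightarrow> 'a) \<Rightarrow> 'a" where
  "det3 a b c =
     a 0 * (b 1 * c 2 - b 2 * c 1) - a 1 * (b 0 * c 2 - b 2 * c 0) + a 2 * (b 0 * c 1 - b 1 * c 0)"

lemma det3_swap23: "det3 a c b = - det3 a b c"
  unfolding det3_def by (simp add: algebra_simps)

lemma det3_cramer:
  assumes "l < 3"
  shows "det3 a b c * d l = det3 d b c * a l + det3 a d c * b l + det3 a b d * c l"
proof -
  have "l = 0 \<or> l = 1 \<or> l = 2" using assms by auto
  then show ?thesis unfolding det3_def by (elim disjE) (simp_all add: algebra_simps)
qed

definition unit3 :: "nat \<Rightarrow> nat \<Rightarrow> 'a::zero_neq_one" where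
  "unit3 k l = (if l = k then 1 else 0)"

(* det3 a b (unit3 m) is the m-th coordinate of the cross product of a and b. *)
lemma det3_unit3_eq_0_imp_proportional:
  fixes a b :: "nat \<Rightarrow> 'a::comm_ring_1"
  assumes "\<forall>m<3. det3 a b (unit3 m) = 0" "k < 3" "l < 3"
  shows "a k * b l = b k * a l"
proof -
  have "det3 a b (unit3 0) = 0" "det3 a b (unit3 1) = 0" "det3 a b (unit3 2) = 0"
    using assms(1) by auto
  moreover have "k = 0 \<or> k = 1 \<or> k = 2" "l = 0 \<or> l = 1 \<or> l = 2" using assms(2,3) by auto
  ultimately show ?thesis unfolding det3_def unit3_def by (auto simp: algebra_simps)
qed

lemma det3_eq_0_imp_dependent:
  fixes a b c :: "nat \<Rightarrow> 'a::field"
  assumes "det3 a b c = 0"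
  obtains x y z where "(x, y, z) \<noteq> (0, 0, 0)" "\<forall>l<3. x * a l + y * b l + z * c l = 0"
proof (cases "\<exists>m<3. det3 a b (unit3 m) \<noteq> 0")
  case True
  then obtain m where "det3 a b (unit3 m) \<noteq> 0" by blast
  moreover have "\<forall>l<3. det3 (unit3 m) b c * a l + det3 a (unit3 m) c * b l + det3 a b (unit3 m) * c l = 0"
    using det3_cramer[of _ a b c "unit3 m"] assms by simp
  ultimately show ?thesis by (intro that) auto
next
  case False
  show ?thesis
  proof (cases "\<exists>k<3. a k \<noteq> 0")
    case True
    then obtain k where "k < 3" "a k \<noteq> 0" by blast
    moreover have "\<forall>l<3. - b k * a l + a k * b l + 0 * c l = 0"
      using det3_unit3_eq_0_imp_proportional[of a b k] False \<open>k < 3\<close> by auto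
    ultimately show ?thesis by (intro that[of "- b k" "a k" 0]) auto
  next
    case False
    then show ?thesis by (intro that[of 1 0 0]) auto
  qed
qed

lemma det3_eq_0_if_coeff_forced:
  fixes a b c d :: "nat \<Rightarrow> 'a::field"
  assumes "\<And>x y z w. \<forall>l<3. x * a l + y * b l + z * c l + w * d l = 0 \<Longrightarrow> w = 0"
  shows "det3 a b c = 0"
proof -
  have "\<forall>l<3. det3 d b c * a l + det3 a d c * b l + det3 a b d * c l + - det3 a b c * d l = 0"
    using det3_cramer[of _ a b c d] by simp
  then show ?thesis using assms by fastforce
qed

lemma recovers_imp_coeff_eq_0:
  fixes c :: "nat \<Rightarrow> 'a::field"
  assumes "recovers n L S V j k" "A \<subseteq> {1..n} - S j" "k \<in> A"
    and "\<forall>l<L. (\<Sum>i\<in>A. c i * V i l) = 0"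
  shows "c k = 0"
proof -
  define W where "W i = (if i \<in> A then c i else 0)" for i
  have "codeword n L V W l = codeword n L V (\<lambda>_. 0) l" if "l < L" for l
  proof -
    have "codeword n L V W l = (\<Sum>i\<in>{1..n} \<inter> A. c i * V i l)"
      unfolding codeword_def W_def by (auto simp: sum.inter_restrict intro!: sum.cong)
    also have "{1..n} \<inter> A = A" using assms(2) by blast
    finally show ?thesis using assms(4) that by (simp add: codeword_def)
  qed
  moreover have "\<forall>m\<in>S j. W m = 0" using assms(2) by (auto simp: W_def)
  ultimately have "W k = 0"
    using assms(1) unfolding recovers_def by (metis (mono_tags, lifting))
  then show ?thesis using assms(3) by (simp add: W_def)
qed

lemma S6_complement: "j \<in> {1..6} \<Longrightarrow> {1..6} - S6 j = insert j (I6 j)"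
  by (auto simp: S6_def I6_def)

lemma valid_code_coeff_eq_0:
  fixes c :: "nat \<Rightarrow> 'a::field"
  assumes "valid_linear_code 6 6 D6 S6 L V" "j \<in> {1..6}" "A \<subseteq> insert j (I6 j)" "j \<in> A"
    and "\<forall>l<L. (\<Sum>i\<in>A. c i * V i l) = 0"
  shows "c j = 0"
proof (rule recovers_imp_coeff_eq_0)
  show "recovers 6 L S6 V j j" using assms(1,2) by (simp add: valid_linear_code_def D6_def)
  show "A \<subseteq> {1..6} - S6 j" using assms(3) S6_complement[OF assms(2)] by blast
qed (use assms in auto)

theorem no_valid_linear_code_length_3:
  fixes V :: "nat \<Rightarrow> nat \<Rightarrow> 'a::field"
  shows "\<not> valid_linear_code 6 6 D6 S6 3 V"
proof
  assume "valid_linear_code 6 6 D6 S6 3 V"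
  note coeff_eq_0 = valid_code_coeff_eq_0[OF this]
  have det134: "det3 (V 1) (V 3) (V 4) = 0"
  proof (rule det3_eq_0_if_coeff_forced)
    fix x y z w assume "\<forall>l<3. x * V 1 l + y * V 3 l + z * V 4 l + w * V 5 l = 0"
    then show "w = 0"
      using coeff_eq_0[of 5 "{5, 1, 3, 4}" "\<lambda>i. if i = 1 then x else if i = 3 then y else if i = 4 then z else w"]
      by (simp add: I6_def add_ac)
  qed
  have det124: "det3 (V 1) (V 2) (V 4) = 0"
  proof (rule det3_eq_0_if_coeff_forced)
    fix x y z w assume "\<forall>l<3. x * V 1 l + y * V 2 l + z * V 4 l + w * V 6 l = 0"
    then show "w = 0"
      using coeff_eq_0[of 6 "{6, 1, 2, 4}" "\<lambda>i. if i = 1 then x else if i = 2 then y else if i = 4 then z else w"]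
      by (simp add: I6_def add_ac)
  qed
  have det132: "det3 (V 1) (V 3) (V 2) \<noteq> 0"
  proof
    assume "det3 (V 1) (V 3) (V 2) = 0"
    then obtain x y z where xyz: "(x, y, z) \<noteq> (0, 0, 0)"
      and dep: "\<forall>l<3. x * V 1 l + y * V 3 l + z * V 2 l = 0"
      by (rule det3_eq_0_imp_dependent)
    have "z = 0"
      using dep coeff_eq_0[of 2 "{2, 1, 3}" "\<lambda>i. if i = 1 then x else if i = 3 then y else z"]
      by (simp add: I6_def add_ac)
    moreover have "y = 0"
      using dep \<open>z = 0\<close> coeff_eq_0[of 3 "{3, 1}" "\<lambda>i. if i = 1 then x else y"]
      by (simp add: I6_def add_ac)
    moreover have "x = 0"
      using dep \<open>y = 0\<close> \<open>z = 0\<close> coeff_eq_0[of 1 "{1}" "\<lambda>_. x"] by (simp add: I6_def)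
    ultimately show False using xyz by simp
  qed
  have V4: "det3 (V 1) (V 3) (V 2) * V 4 l = det3 (V 4) (V 3) (V 2) * V 1 l" if "l < 3" for l
    using det3_cramer[OF that, of "V 1" "V 3" "V 2" "V 4"] det134 det124 det3_swap23[of "V 1" "V 2" "V 4"]
    by simp
  have "det3 (V 4) (V 3) (V 2) = 0"
    using V4 coeff_eq_0[of 1 "{1, 4}"
      "\<lambda>i. if i = 1 then det3 (V 4) (V 3) (V 2) else - det3 (V 1) (V 3) (V 2)"]
    by (simp add: I6_def)
  then have "\<forall>l<3. V 4 l = 0" using V4 det132 by simp
  then show False using coeff_eq_0[of 4 "{4}" "\<lambda>_. 1"] by simp
qed

lemma Interf_S6_self: "j \<in> {1..6} \<Longrightarrow> Interf 6 S6 j j = I6 j"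
  by (auto simp: Interf_def S6_def I6_def)

theorem no_acyclic_subset4: "\<not> has_acyclic_subset4 6 6 D6 S6"
proof
  assume "has_acyclic_subset4 6 6 D6 S6"
  then obtain i :: "nat \<Rightarrow> nat" where inj: "inj_on i {..<4}"
    and acyclic: "\<forall>k<4. \<exists>j\<in>{1..6}. i k \<in> D6 j \<and> i ` {..<k} \<subseteq> Interf 6 S6 j (i k)"
    unfolding has_acyclic_subset4_def by blast
  have earlier: "i ` {..<k} \<subseteq> I6 (i k)" if "k < 4" for k
    using acyclic that Interf_S6_self by (fastforce simp: D6_def)
  have "i 0 \<in> I6 (i 1)" using earlier[of 1] by auto
  moreover have "i 0 \<in> I6 (i 2)" "i 1 \<in> I6 (i 2)"
    using earlier[of 2] by (auto simp: lessThan_nat_numeral)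
  moreover have "i 0 \<in> I6 (i 3)" "i 1 \<in> I6 (i 3)" "i 2 \<in> I6 (i 3)"
    using earlier[of 3] by (auto simp: lessThan_nat_numeral)
  moreover have "i 0 \<noteq> i 1" "i 0 \<noteq> i 2" "i 1 \<noteq> i 2"
    using inj by (auto dest: inj_onD)
  ultimately show False by (auto simp: I6_def split: if_splits)
qed

theorem mainTheorem10:
  shows "\<not> has_acyclic_subset4 6 6 D6 S6 \<and>
         (\<forall>V :: nat \<Rightarrow> nat \<Rightarrow> 'a::{field,finite}. \<not> valid_linear_code 6 6 D6 S6 3 V)"
  using no_acyclic_subset4 no_valid_linear_code_length_3 by blast

end
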